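(* Let $0<\lambda<1$ and $b\in\mathbb{D}$. Then the functions $f_b(z)=(1-|b|^2)^{\frac{\lambda-1}{2}}(\sigma_b(z)-b)$ and $F_b(z)=(1-|b|^2)(1-\overline{b}z)^{\frac{\lambda-3}{2}}$ belong to $\mathcal{L}^{2,\lambda}(\mathbb{D})$, and $\|f_b\|_{\mathcal{L}^{2,\lambda}}\lesssim 1$, $\|F_b\|_{\mathcal{L}^{2,\lambda}}\lesssim 1$, with implicit constants independent of $b$.
   Context: $\mathbb{D}$ is the open unit disc, $dA=\frac{1}{\pi}dx\,dy$, and $\sigma_b(z)=\frac{b-z}{1-\overline{b}z}$. $H^2(\mathbb{D})$ is the Hardy space. For an arc $I\subset\partial\mathbb{D}$, $|I|=\frac{1}{2\pi}\int_I|d\zeta|$, $f_I=\frac{1}{|I|}\int_I f(\zeta)\frac{|d\zeta|}{2\pi}$, and $S(I)=\{z\in\mathbb{D}:1-|I|\le |z|<1,\ z/|z|\in I\}$. For $0<\lambda\le 1$, $\mathcal{L}^{2,\lambda}(\mathbb{D})$ is the set of $f\in H^2(\mathbb{D})$ with $\sup_{I}\big(|I|^{-\lambda}\int_I|f(\zeta)-f_I|^2\frac{|d\zeta|}{2\pi}\big)^{1/2}<\infty$, normed by $\|f\|_{\mathcal{L}^{2,\lambda}}=|f(0)|+\sup_{I}\big(|I|^{-\lambda}\int_{S(I)}|f'(z)|^2(1-|z|^2)dA(z)\big)^{1/2}$. The power $(1-\overline{b}z)^{\frac{\lambda-3}{2}}$ uses the principal branch. *)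

theory Defs
  imports "HOL-Complex_Analysis.Complex_Analysis"
begin

definition disc :: "complex set" where "disc = ball 0 1"

definition sigma :: "complex \<Rightarrow> complex \<Rightarrow> complex" where
  "sigma b z = (b - z) / (1 - cnj b * z)"

definition H2 :: "(complex \<Rightarrow> complex) set" where
  "H2 = {f. f holomorphic_on disc \<and>
     (\<exists>M::real. \<forall>r\<in>{0..<1}.
        (\<integral>\<^sup>+ t. indicator {0..2*pi} t * ennreal ((cmod (f (complex_of_real r * cis t)))\<^sup>2 / (2*pi)) \<partial>lborel)
          \<le> ennreal M)}"

definition bdry :: "(complex \<Rightarrow> complex) \<Rightarrow> real \<Rightarrow> complex" where
  "bdry f t = Lim (at_left 1) (\<lambda>r::real. f (complex_of_real r * cis t))"

text \<open>Arcs of the unit circle: I = {e^{it} : a \<le> t \<le> a + 2 pi l}, 0 < l \<le> 1, so |I| = l.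
  Averages f_I over the arc (w.r.t. normalized arc length).\<close>
definition arc_avg :: "(complex \<Rightarrow> complex) \<Rightarrow> real \<Rightarrow> real \<Rightarrow> complex" where
  "arc_avg f a l = (1 / l) * ((1 / (2*pi)) * (LBINT t=a..a + 2*pi*l. bdry f t))"

definition Sbox :: "real \<Rightarrow> real \<Rightarrow> complex set" where
  "Sbox a l = {z. 1 - l \<le> cmod z \<and> cmod z < 1 \<and> (\<exists>t\<in>{a..a + 2*pi*l}. z / complex_of_real (cmod z) = cis t)}"

definition ennsqrt :: "ennreal \<Rightarrow> ennreal" where
  "ennsqrt x = (if x = top then top else ennreal (sqrt (enn2real x)))"

definition bdry_morrey :: "real \<Rightarrow> (complex \<Rightarrow> complex) \<Rightarrow> ennreal" where
  "bdry_morrey lam f = (SUP (a, l)\<in>UNIV \<times> {0<..1}.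
     ennsqrt (ennreal (l powr (-lam)) *
       (\<integral>\<^sup>+ t. indicator {a..a + 2*pi*l} t *
           ennreal ((cmod (bdry f t - arc_avg f a l))\<^sup>2 / (2*pi)) \<partial>lborel)))"

definition L2lam :: "real \<Rightarrow> (complex \<Rightarrow> complex) set" where
  "L2lam lam = {f. f \<in> H2 \<and> bdry_morrey lam f < top}"

text \<open>The norm, with dA = dx dy / pi.\<close>
definition L2lam_norm :: "real \<Rightarrow> (complex \<Rightarrow> complex) \<Rightarrow> ennreal" where
  "L2lam_norm lam f = ennreal (cmod (f 0)) + (SUP (a, l)\<in>UNIV \<times> {0<..1}.
     ennsqrt (ennreal (l powr (-lam)) *
       (\<integral>\<^sup>+ z. indicator (Sbox a l) z *
           ennreal ((cmod (deriv f z))\<^sup>2 * (1 - (cmod z)\<^sup>2) / pi) \<partial>lborel)))"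

end

theory Submission
  imports Defs
begin

text \<open>Write d = 1 - |b| and w(z) = d^(lam+1) / |1 - conj b z|^4. Both |f_b'|^2 and |F_b'|^2 are
  bounded by a multiple of w, so the norm bound reduces to bounding l^(-lam) times the integral of
  w (1 - |z|^2) dA over a Carleson box of side l. If l \<le> d, then w \<le> d^(lam-3) and the box lies in a
  disc of radius 9 l, which gives (l/d)^(3-lam) \<le> 1. If l > d, we use |z - b/|b|| \<le> 2 |1 - conj b z| and
  1 - |z|^2 \<le> 2 |z - b/|b||: the dyadic disc of radius 2^(k+1) d around b/|b| contributes d^lam 2^-k, so
  the total is a multiple of d^lam \<le> l^lam. Membership in the Morrey space is soft: both functions are
  holomorphic on a half-plane containing the closed disc, hence bounded with continuous boundary values.\<close>

lemma emeasure_ball_complex: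
  fixes c :: complex
  assumes "0 \<le> r"
  shows "emeasure lborel (ball c r) = ennreal (pi * r\<^sup>2)"
  using emeasure_ball[OF assms, of c] by (simp add: unit_ball_vol_2)

lemma nn_integral_const_indicator_ball:
  fixes \<zeta> :: complex
  assumes "0 \<le> c" "0 \<le> r"
  shows "(\<integral>\<^sup>+ z. ennreal (c / pi) * indicator (ball \<zeta> r) z \<partial>lborel) = ennreal (c * r\<^sup>2)"
  using assms by (simp add: nn_integral_cmult_indicator emeasure_ball_complex flip: ennreal_mult)

lemma ennreal_le_suminf_term: "(f k :: ennreal) \<le> (\<Sum>n. f n)"
  using sum_le_suminf[of f "{k}"] by simp

lemma ennreal_mult_le_if_le:
  assumes "X \<le> ennreal B" "x * B \<le> C" "0 \<le> x"
  shows "ennreal x * X \<le> ennreal C"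
proof -
  have "ennreal x * X \<le> ennreal x * ennreal B" using assms(1) by (rule mult_left_mono) simp
  also have "\<dots> = ennreal (x * B)" using assms(3) by (simp add: ennreal_mult')
  also have "\<dots> \<le> ennreal C" using assms(2) by (rule ennreal_leI)
  finally show ?thesis .
qed

section \<open>Geometry of Carleson boxes\<close>

lemma norm_cis_diff_le: "cmod (cis t - cis a) \<le> \<bar>t - a\<bar>"
proof -
  have "(cmod (cis (t - a) - 1))\<^sup>2 = (cos (t - a) - 1)\<^sup>2 + (sin (t - a))\<^sup>2"
    by (simp add: cmod_power2)
  also have "\<dots> = 2 - 2 * cos (t - a)"
    using sin_cos_squared_add[of "t - a"] by (simp add: power2_eq_square algebra_simps)
  also have "\<dots> = 4 * (sin ((t - a) / 2))\<^sup>2"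
    using cos_double_sin[of "(t - a) / 2", unfolded mult_2 field_sum_of_halves] by simp
  also have "\<dots> = (2 * sin ((t - a) / 2))\<^sup>2" by (simp add: power_mult_distrib)
  also have "\<dots> \<le> (t - a)\<^sup>2"
    using abs_sin_x_le_abs_x[of "(t - a) / 2"]
    by (subst abs_le_square_iff[symmetric]) (simp add: abs_mult)
  finally have "cmod (cis (t - a) - 1) \<le> \<bar>t - a\<bar>"
    by (metis abs_le_square_iff abs_norm_cancel)
  moreover have "cis t - cis a = cis a * (cis (t - a) - 1)"
    by (simp add: algebra_simps cis_mult)
  ultimately show ?thesis by (simp add: norm_mult)
qed

lemma Sbox_subset_disc: "Sbox a l \<subseteq> disc"
  by (auto simp: Sbox_def disc_def)

lemma one_minus_norm_le_if_in_Sbox: "z \<in> Sbox a l \<Longrightarrow> 1 - cmod z \<le> l"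
  by (simp add: Sbox_def)

lemma Sbox_subset_ball:
  assumes "0 < l"
  shows "Sbox a l \<subseteq> ball (cis a) (9 * l)"
proof
  fix z assume z: "z \<in> Sbox a l"
  then obtain t where t: "t \<in> {a..a + 2*pi*l}" "z / complex_of_real (cmod z) = cis t"
    and r: "1 - l \<le> cmod z" "cmod z < 1" unfolding Sbox_def by auto
  have "z \<noteq> 0" using t(2) by auto
  hence "z - cis t = of_real (cmod z - 1) * cis t"
    using t(2) by (simp add: field_simps)
  hence "cmod (z - cis t) = 1 - cmod z"
    using r by (simp only: norm_mult norm_cis norm_of_real) simp
  moreover have "cmod (cis t - cis a) \<le> 2 * pi * l"
    using norm_cis_diff_le[of t a] t(1) by auto
  moreover have "cmod (z - cis a) \<le> cmod (z - cis t) + cmod (cis t - cis a)"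
    using norm_triangle_ineq[of "z - cis t" "cis t - cis a"] by simp
  moreover have "2 * pi * l < 8 * l" using pi_less_4 assms by simp
  ultimately have "cmod (z - cis a) < 9 * l" using r by linarith
  thus "z \<in> ball (cis a) (9 * l)" by (simp add: dist_norm norm_minus_commute)
qed

lemma one_minus_norm_sq_bounds:
  assumes "cmod z \<le> 1"
  shows "0 \<le> 1 - (cmod z)\<^sup>2" "1 - (cmod z)\<^sup>2 \<le> 2 * (1 - cmod z)"
proof -
  have "(cmod z)\<^sup>2 \<le> 1" using assms by (simp add: power_le_one)
  thus "0 \<le> 1 - (cmod z)\<^sup>2" by simp
  have "1 - (cmod z)\<^sup>2 = (1 - cmod z) * (1 + cmod z)" by (simp add: power2_eq_square algebra_simps)
  also have "\<dots> \<le> (1 - cmod z) * 2" using assms by (intro mult_left_mono) auto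
  finally show "1 - (cmod z)\<^sup>2 \<le> 2 * (1 - cmod z)" by simp
qed

lemma norm_one_minus_cnj_mult_ge:
  assumes "cmod z \<le> 1"
  shows "1 - cmod b \<le> cmod (1 - cnj b * z)"
proof -
  have "cmod b * cmod z \<le> cmod b" using assms mult_left_mono[of "cmod z" 1 "cmod b"] by simp
  with norm_triangle_ineq2[of 1 "cnj b * z"] show ?thesis by (simp add: norm_mult)
qed

lemma norm_diff_sgn_le:
  assumes "cmod b \<le> 1" "cmod z \<le> 1"
  shows "cmod (z - sgn b) \<le> 2 * cmod (1 - cnj b * z)"
proof -
  have "sgn b * cnj b = of_real (cmod b)"
    by (cases "b = 0") (simp_all add: sgn_div_norm scaleR_conv_of_real field_simps
        complex_norm_square[symmetric] power2_eq_square)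
  hence "z - sgn b = of_real (1 - cmod b) * z - sgn b * (1 - cnj b * z)"
    by (simp add: algebra_simps)
  hence "cmod (z - sgn b) \<le> (1 - cmod b) * cmod z + cmod (sgn b) * cmod (1 - cnj b * z)"
    using norm_triangle_ineq4 assms(1) by (metis abs_of_nonneg diff_ge_0_iff_ge norm_mult norm_of_real)
  also have "\<dots> \<le> (1 - cmod b) + cmod (1 - cnj b * z)"
    using assms mult_left_mono[of "cmod z" 1 "1 - cmod b"] mult_right_mono[of "cmod (sgn b)" 1]
    by (intro add_mono) (auto simp: norm_sgn)
  also have "\<dots> \<le> 2 * cmod (1 - cnj b * z)"
    using norm_one_minus_cnj_mult_ge[OF assms(2), of b] by simp
  finally show ?thesis .
qed

section \<open>The Carleson estimate for the weight\<close>

definition mobius_weight :: "real \<Rightarrow> complex \<Rightarrow> complex \<Rightarrow> real" where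
  "mobius_weight lam b z = (1 - cmod b) powr (lam + 1) / cmod (1 - cnj b * z) ^ 4"

definition box_energy :: "(complex \<Rightarrow> real) \<Rightarrow> real \<Rightarrow> real \<Rightarrow> ennreal" where
  "box_energy g a l =
     (\<integral>\<^sup>+ z. indicator (Sbox a l) z * ennreal (g z * (1 - (cmod z)\<^sup>2) / pi) \<partial>lborel)"

lemma mobius_weight_le:
  assumes "0 < w" "w \<le> cmod (1 - cnj b * z)"
  shows "mobius_weight lam b z \<le> (1 - cmod b) powr (lam + 1) / w ^ 4"
  unfolding mobius_weight_def using assms by (intro divide_left_mono power_mono mult_pos_pos) auto

lemma box_energy_le_near:
  assumes b: "b \<in> disc" "l \<le> 1 - cmod b" and l: "0 < l" and K: "0 \<le> K"
    and g: "\<And>z. z \<in> disc \<Longrightarrow> 0 \<le> g z \<and> g z \<le> K * mobius_weight lam b z"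
  shows "box_energy g a l \<le> ennreal (162 * K * (1 - cmod b) powr (lam - 3) * l ^ 3)"
proof -
  define d where "d = 1 - cmod b"
  have d: "0 < d" using b by (simp add: d_def disc_def)
  define c where "c = 2 * K * d powr (lam - 3) * l"
  have "d ^ 4 = d powr 4" using d by (simp add: powr_numeral)
  hence "d powr (lam + 1) / d ^ 4 = d powr ((lam + 1) - 4)" by (simp only: powr_diff)
  hence "d powr (lam + 1) / d ^ 4 = d powr (lam - 3)" by simp
  hence weight: "mobius_weight lam b z \<le> d powr (lam - 3)" if "cmod z \<le> 1" for z
    using mobius_weight_le[of d b z lam] norm_one_minus_cnj_mult_ge[OF that, of b] d
    by (simp add: d_def)
  have "indicator (Sbox a l) z * ennreal (g z * (1 - (cmod z)\<^sup>2) / pi)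
      \<le> ennreal (c / pi) * indicator (ball (cis a) (9 * l)) z" for z
  proof (cases "z \<in> Sbox a l")
    case True
    hence "z \<in> disc" using Sbox_subset_disc by blast
    hence z: "z \<in> disc" "cmod z \<le> 1" by (simp_all add: disc_def)
    have "g z \<le> K * d powr (lam - 3)"
      using g[OF z(1)] mult_left_mono[OF weight[OF z(2)] K] by linarith
    moreover have "1 - (cmod z)\<^sup>2 \<le> 2 * l"
      using one_minus_norm_sq_bounds(2)[OF z(2)] one_minus_norm_le_if_in_Sbox[OF True] by simp
    ultimately have "g z * (1 - (cmod z)\<^sup>2) \<le> K * d powr (lam - 3) * (2 * l)"
      using g[OF z(1)] one_minus_norm_sq_bounds(1)[OF z(2)] K by (intro mult_mono) auto
    hence "g z * (1 - (cmod z)\<^sup>2) \<le> c" by (simp add: c_def)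
    moreover have "z \<in> ball (cis a) (9 * l)" using True Sbox_subset_ball[OF l] by blast
    ultimately show ?thesis using True by (simp add: ennreal_leI divide_right_mono)
  qed simp
  hence "box_energy g a l \<le> (\<integral>\<^sup>+ z. ennreal (c / pi) * indicator (ball (cis a) (9 * l)) z \<partial>lborel)"
    unfolding box_energy_def by (intro nn_integral_mono)
  also have "\<dots> = ennreal (c * (9 * l)\<^sup>2)"
    using K d l by (intro nn_integral_const_indicator_ball) (auto simp: c_def)
  also have "c * (9 * l)\<^sup>2 = 162 * K * (1 - cmod b) powr (lam - 3) * l ^ 3"
    by (simp add: c_def d_def power2_eq_square power3_eq_cube)
  finally show ?thesis .
qed

lemma exists_dyadic_scale:
  fixes r \<rho> :: real
  assumes "0 < r" "0 \<le> \<rho>"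
  obtains k :: nat where "\<rho> < r * 2 ^ k" "k = 0 \<or> r * 2 ^ k \<le> 2 * \<rho>"
proof -
  obtain n :: nat where "\<rho> / r < 2 ^ n" using real_arch_pow[of 2 "\<rho> / r"] by auto
  hence ex: "\<exists>k::nat. \<rho> < r * 2 ^ k" using assms by (auto simp: field_simps)
  define k where "k = (LEAST k::nat. \<rho> < r * 2 ^ k)"
  have "\<rho> < r * 2 ^ k" unfolding k_def by (rule LeastI_ex[OF ex])
  moreover have "r * 2 ^ k \<le> 2 * \<rho>" if "k = Suc m" for m
  proof -
    have "\<not> \<rho> < r * 2 ^ m" using not_less_Least[of m "\<lambda>k. \<rho> < r * 2 ^ k"] that k_def by simp
    thus ?thesis using that by simp
  qed
  ultimately show ?thesis using that[of k] by (cases k) auto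
qed

lemma dyadic_decay_bound:
  fixes d W \<rho> G P s r :: real
  assumes W: "0 < d" "d \<le> W" "\<rho> \<le> 2 * W" and G: "0 \<le> G" "G \<le> P / W ^ 4"
    and s: "0 \<le> s" "s \<le> 2 * \<rho>" and r: "\<rho> < r" "r = 2 * d \<or> r \<le> 2 * \<rho>"
  shows "G * s \<le> 256 * P / r ^ 3"
proof -
  have "0 \<le> P / W ^ 4" "0 < W ^ 4" using G W by auto
  hence P: "0 \<le> P" by (simp add: zero_le_divide_iff)
  consider "r = 2 * d" | "r \<le> 2 * \<rho>" using r(2) by blast
  thus ?thesis
  proof cases
    case 1
    have "G * s \<le> P / d ^ 4 * (4 * d)"
      using W G s r 1 P by (intro mult_mono order_trans[OF G(2)] divide_left_mono power_mono) auto
    also have "\<dots> \<le> 256 * P / r ^ 3"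
      using 1 W P by (simp add: field_simps power_eq_if)
    finally show ?thesis .
  next
    case 2
    have \<rho>: "0 < \<rho>" using 2 r(1) s by linarith
    have "G * s \<le> P / (\<rho> / 2) ^ 4 * (2 * \<rho>)"
      using W G s \<rho> P by (intro mult_mono order_trans[OF G(2)] divide_left_mono power_mono) auto
    also have "\<dots> = 32 * P / \<rho> ^ 3" using \<rho> by (simp add: field_simps power_eq_if)
    also have "\<dots> \<le> 32 * P / (r / 2) ^ 3"
      using 2 \<rho> r P by (intro divide_left_mono power_mono) auto
    also have "\<dots> = 256 * P / r ^ 3" by (simp add: field_simps power_eq_if)
    finally show ?thesis .
  qed
qed

lemma dyadic_pointwise_bound:
  assumes b: "b \<in> disc" "b \<noteq> 0" and z: "z \<in> disc"
    and g: "0 \<le> G" "G \<le> K * mobius_weight lam b z"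
  obtains k :: nat where
    "G * (1 - (cmod z)\<^sup>2) \<le> 256 * (K * (1 - cmod b) powr (lam + 1)) / (2 * (1 - cmod b) * 2 ^ k) ^ 3"
    "z \<in> ball (sgn b) (2 * (1 - cmod b) * 2 ^ k)"
proof -
  define d where "d = 1 - cmod b"
  define \<rho> where "\<rho> = cmod (z - sgn b)"
  have d: "0 < d" and z1: "cmod z \<le> 1" using b z by (simp_all add: d_def disc_def)
  obtain k where k: "\<rho> < 2 * d * 2 ^ k" "k = 0 \<or> 2 * d * 2 ^ k \<le> 2 * \<rho>"
    using exists_dyadic_scale[of "2 * d" \<rho>] d by (auto simp: \<rho>_def)
  have "1 - cmod z \<le> \<rho>"
    using norm_triangle_ineq2[of "sgn b" z] b(2) by (simp add: \<rho>_def norm_minus_commute norm_sgn)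
  moreover have "G \<le> K * d powr (lam + 1) / cmod (1 - cnj b * z) ^ 4"
    using g by (simp add: mobius_weight_def d_def)
  ultimately have "G * (1 - (cmod z)\<^sup>2) \<le> 256 * (K * d powr (lam + 1)) / (2 * d * 2 ^ k) ^ 3"
    using k g one_minus_norm_sq_bounds[OF z1] d norm_one_minus_cnj_mult_ge[OF z1, of b]
      norm_diff_sgn_le[of b z] z1 b(1)
    by (intro dyadic_decay_bound[where d = d and W = "cmod (1 - cnj b * z)" and \<rho> = \<rho>])
      (auto simp: d_def \<rho>_def disc_def)
  moreover have "z \<in> ball (sgn b) (2 * d * 2 ^ k)"
    using k(1) by (simp add: \<rho>_def dist_norm norm_minus_commute)
  ultimately show ?thesis using that by (simp add: d_def)
qed

lemma nn_integral_dyadic_balls: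
  fixes \<zeta> :: complex
  assumes "0 < d" "0 \<le> P"
  shows "(\<integral>\<^sup>+ z. (\<Sum>k. ennreal (256 * P / (2 * d * 2 ^ k) ^ 3 / pi) * indicator (ball \<zeta> (2 * d * 2 ^ k)) z) \<partial>lborel)
    = ennreal (256 * P / d)"
proof -
  have [measurable]: "ball \<zeta> r \<in> sets borel" for r by simp
  have "(\<integral>\<^sup>+ z. (\<Sum>k. ennreal (256 * P / (2 * d * 2 ^ k) ^ 3 / pi) * indicator (ball \<zeta> (2 * d * 2 ^ k)) z) \<partial>lborel)
      = (\<Sum>k. \<integral>\<^sup>+ z. ennreal (256 * P / (2 * d * 2 ^ k) ^ 3 / pi) * indicator (ball \<zeta> (2 * d * 2 ^ k)) z \<partial>lborel)"
    by (intro nn_integral_suminf) measurable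
  also have "\<dots> = (\<Sum>k. ennreal (128 * P / d * (1 / 2) ^ k))"
  proof (intro suminf_cong)
    fix k :: nat
    have "256 * P / (2 * d * 2 ^ k) ^ 3 * (2 * d * 2 ^ k)\<^sup>2 = 128 * P / d * (1 / 2) ^ k"
      using assms by (simp add: power2_eq_square power3_eq_cube field_simps power_one_over)
    moreover have "0 \<le> 256 * P / (2 * d * 2 ^ k) ^ 3" "0 \<le> 2 * d * 2 ^ k" using assms by auto
    ultimately show "(\<integral>\<^sup>+ z. ennreal (256 * P / (2 * d * 2 ^ k) ^ 3 / pi) * indicator (ball \<zeta> (2 * d * 2 ^ k)) z \<partial>lborel)
        = ennreal (128 * P / d * (1 / 2) ^ k)"
      by (simp only: nn_integral_const_indicator_ball)
  qed
  also have "\<dots> = ennreal (256 * P / d)"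
    using sums_mult[OF geometric_sums[of "1 / 2 :: real"], of "128 * P / d"] assms
    by (intro suminf_ennreal_eq) auto
  finally show ?thesis .
qed

lemma box_energy_le_far:
  assumes b: "b \<in> disc" "1 - cmod b < l" "l \<le> 1" and K: "0 \<le> K"
    and g: "\<And>z. z \<in> disc \<Longrightarrow> 0 \<le> g z \<and> g z \<le> K * mobius_weight lam b z"
  shows "box_energy g a l \<le> ennreal (256 * K * (1 - cmod b) powr lam)"
proof -
  define d where "d = 1 - cmod b"
  define P where "P = K * d powr (lam + 1)"
  have d: "0 < d" and P: "0 \<le> P" using b K by (simp_all add: d_def P_def disc_def)
  have "b \<noteq> 0" using b by (auto simp: d_def)
  have "indicator (Sbox a l) z * ennreal (g z * (1 - (cmod z)\<^sup>2) / pi)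
      \<le> (\<Sum>k. ennreal (256 * P / (2 * d * 2 ^ k) ^ 3 / pi) * indicator (ball (sgn b) (2 * d * 2 ^ k)) z)" for z
  proof (cases "z \<in> Sbox a l")
    case True
    hence z: "z \<in> disc" using Sbox_subset_disc by blast
    then obtain k where
      "g z * (1 - (cmod z)\<^sup>2) \<le> 256 * P / (2 * d * 2 ^ k) ^ 3" "z \<in> ball (sgn b) (2 * d * 2 ^ k)"
      using dyadic_pointwise_bound[OF b(1) \<open>b \<noteq> 0\<close> z] g[OF z] unfolding P_def d_def by blast
    moreover from this(1) have "ennreal (g z * (1 - (cmod z)\<^sup>2) / pi) \<le> ennreal (256 * P / (2 * d * 2 ^ k) ^ 3 / pi)"
      by (intro ennreal_leI divide_right_mono) auto
    ultimately have "indicator (Sbox a l) z * ennreal (g z * (1 - (cmod z)\<^sup>2) / pi)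
        \<le> ennreal (256 * P / (2 * d * 2 ^ k) ^ 3 / pi) * indicator (ball (sgn b) (2 * d * 2 ^ k)) z"
      using True by simp
    also have "\<dots> \<le> (\<Sum>k. ennreal (256 * P / (2 * d * 2 ^ k) ^ 3 / pi) * indicator (ball (sgn b) (2 * d * 2 ^ k)) z)"
      by (rule ennreal_le_suminf_term)
    finally show ?thesis .
  qed simp
  hence "box_energy g a l \<le> ennreal (256 * P / d)"
    unfolding box_energy_def nn_integral_dyadic_balls[OF d P, of "sgn b", symmetric] by (rule nn_integral_mono)
  also have "256 * P / d = 256 * K * d powr lam"
    using d by (simp add: P_def powr_add)
  finally show ?thesis by (simp add: d_def)
qed

lemma scaled_box_energy_le:
  assumes b: "b \<in> disc" and lam: "0 \<le> lam" "lam \<le> 3" and l: "0 < l" "l \<le> 1" and K: "0 \<le> K"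
    and g: "\<And>z. z \<in> disc \<Longrightarrow> 0 \<le> g z \<and> g z \<le> K * mobius_weight lam b z"
  shows "ennreal (l powr (-lam)) * box_energy g a l \<le> ennreal (256 * K)"
proof -
  define d where "d = 1 - cmod b"
  have d: "0 < d" using b by (simp add: d_def disc_def)
  have scale: "?thesis" if "box_energy g a l \<le> ennreal B" "l powr (-lam) * B \<le> 256 * K" for B
    using that by (intro ennreal_mult_le_if_le) auto
  show ?thesis
  proof (cases "l \<le> d")
    case True
    have "l powr (-lam) * l ^ 3 = l powr (3 - lam)"
    proof -
      have "l ^ 3 = l powr 3" using l by (simp add: powr_numeral)
      thus ?thesis by (simp add: powr_add [symmetric])
    qed
    also have "\<dots> \<le> d powr (3 - lam)" using True l lam by (intro powr_mono2) auto
    finally have "l powr (-lam) * (162 * K * d powr (lam - 3) * l ^ 3)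
        \<le> 162 * K * (d powr (lam - 3) * d powr (3 - lam))"
      using K d by (simp add: mult_left_mono algebra_simps)
    also have "\<dots> \<le> 256 * K" using d K by (simp flip: powr_add)
    finally have "l powr (-lam) * (162 * K * d powr (lam - 3) * l ^ 3) \<le> 256 * K" .
    moreover have "box_energy g a l \<le> ennreal (162 * K * d powr (lam - 3) * l ^ 3)"
      using box_energy_le_near[OF b _ l(1) K g] True by (simp add: d_def)
    ultimately show ?thesis using scale by blast
  next
    case False
    have "l powr (-lam) * d powr lam \<le> l powr (-lam) * l powr lam"
      using False d lam by (intro mult_left_mono powr_mono2) auto
    hence "l powr (-lam) * (256 * K * d powr lam) \<le> 256 * K"
      using l K by (simp add: mult_left_mono algebra_simps flip: powr_add)
    moreover have "box_energy g a l \<le> ennreal (256 * K * d powr lam)"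
      using box_energy_le_far[OF b _ l(2) K g] False by (simp add: d_def)
    ultimately show ?thesis using scale by blast
  qed
qed

section \<open>Boundary values and the Morrey seminorm\<close>

lemma bdry_eq_if_continuous_on_cball:
  assumes "continuous_on (cball 0 1) f"
  shows "bdry f t = f (cis t)"
proof -
  have "((\<lambda>r::real. complex_of_real r * cis t) \<longlongrightarrow> cis t) (at_left 1)"
    by (auto intro!: tendsto_eq_intros)
  moreover have "\<forall>\<^sub>F r in at_left 1. r \<in> {0<..<1::real}" by (rule eventually_at_left_real) simp
  hence "\<forall>\<^sub>F r in at_left 1. complex_of_real r * cis t \<in> cball 0 1"
    by eventually_elim (auto simp: norm_mult)
  ultimately have "((\<lambda>r::real. f (complex_of_real r * cis t)) \<longlongrightarrow> f (cis t)) (at_left 1)"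
    by (intro continuous_on_tendsto_compose[OF assms]) auto
  thus ?thesis unfolding bdry_def by (intro tendsto_Lim) (auto simp: trivial_limit_at_left_real)
qed

lemma nn_integral_arc_le:
  assumes "0 \<le> l" "0 \<le> M" "\<And>t. h t \<le> M"
  shows "(\<integral>\<^sup>+ t. indicator {a..a + 2*pi*l} t * ennreal (h t / (2*pi)) \<partial>lborel) \<le> ennreal (M * l)"
proof -
  have "(\<integral>\<^sup>+ t. indicator {a..a + 2*pi*l} t * ennreal (h t / (2*pi)) \<partial>lborel)
      \<le> (\<integral>\<^sup>+ t. ennreal (M / (2*pi)) * indicator {a..a + 2*pi*l} t \<partial>lborel)"
    using assms(3) by (intro nn_integral_mono) (auto simp: indicator_def intro!: ennreal_leI divide_right_mono)
  also have "\<dots> = ennreal (M * l)"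
    using assms by (simp add: nn_integral_cmult_indicator flip: ennreal_mult)
  finally show ?thesis .
qed

lemma H2_if_bounded:
  assumes "f holomorphic_on disc" "\<And>z. z \<in> disc \<Longrightarrow> cmod (f z) \<le> M"
  shows "f \<in> H2"
  unfolding H2_def
proof (intro CollectI conjI assms(1) exI ballI)
  fix r :: real assume "r \<in> {0..<1}"
  hence "complex_of_real r * cis t \<in> disc" for t by (simp add: disc_def norm_mult)
  hence "(cmod (f (complex_of_real r * cis t)))\<^sup>2 \<le> M\<^sup>2" for t
    using assms(2) by (intro power_mono) auto
  moreover have "0 \<le> M"
    using assms(2)[of 0] order_trans[OF norm_ge_zero] by (auto simp: disc_def)
  ultimately show "(\<integral>\<^sup>+ t. indicator {0..2*pi} t *
      ennreal ((cmod (f (complex_of_real r * cis t)))\<^sup>2 / (2*pi)) \<partial>lborel) \<le> ennreal (M\<^sup>2)"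
    using nn_integral_arc_le[of 1 "M\<^sup>2" "\<lambda>t. (cmod (f (complex_of_real r * cis t)))\<^sup>2" 0] by simp
qed

lemma norm_arc_avg_le:
  assumes "continuous_on UNIV (bdry f)" "\<And>t. cmod (bdry f t) \<le> M" "0 < l"
  shows "cmod (arc_avg f a l) \<le> M"
proof -
  have M: "0 \<le> M" using assms(2)[of 0] norm_ge_zero[of "bdry f 0"] by linarith
  have "set_integrable lborel {a..a + 2*pi*l} (bdry f)"
    by (rule borel_integrable_atLeastAtMost'[OF continuous_on_subset[OF assms(1)]]) simp
  hence "ennreal (cmod (LBINT t:{a..a + 2*pi*l}. bdry f t))
      \<le> (\<integral>\<^sup>+ t. norm (indicator {a..a + 2*pi*l} t *\<^sub>R bdry f t) \<partial>lborel)"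
    unfolding set_lebesgue_integral_def set_integrable_def by (rule integral_norm_bound_ennreal)
  also have "\<dots> = (\<integral>\<^sup>+ t. indicator {a..a + 2*pi*l} t * ennreal (cmod (bdry f t) * (2*pi) / (2*pi)) \<partial>lborel)"
    \<comment> \<open>the factor (2 pi) / (2 pi) puts the integrand into the shape of \<open>nn_integral_arc_le\<close>\<close>
    by (intro nn_integral_cong) (simp add: indicator_def)
  finally have "ennreal (cmod (LBINT t=a..a + 2*pi*l. bdry f t))
      \<le> (\<integral>\<^sup>+ t. indicator {a..a + 2*pi*l} t * ennreal (cmod (bdry f t) * (2*pi) / (2*pi)) \<partial>lborel)"
    using assms(3) by (simp add: interval_integral_Icc)
  also have "\<dots> \<le> ennreal (M * (2*pi) * l)"
    using assms(2,3) M by (intro nn_integral_arc_le) auto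
  finally have "cmod (LBINT t=a..a + 2*pi*l. bdry f t) \<le> M * (2*pi) * l"
    using M assms(3) by (subst (asm) ennreal_le_iff) auto
  thus ?thesis using assms(3) by (simp add: arc_avg_def norm_mult norm_divide field_simps)
qed

lemma ennsqrt_le:
  assumes "x \<le> ennreal K" "0 \<le> K"
  shows "ennsqrt x \<le> ennreal (sqrt K)"
proof -
  have "x \<noteq> top" using assms by (auto simp: top_unique)
  moreover have "enn2real x \<le> K" using assms calculation by (simp add: enn2real_leI)
  ultimately show ?thesis unfolding ennsqrt_def by (simp add: ennreal_leI)
qed

lemma bdry_morrey_le:
  assumes "continuous_on UNIV (bdry f)" "\<And>t. cmod (bdry f t) \<le> M" "0 \<le> lam" "lam \<le> 1"
  shows "bdry_morrey lam f \<le> ennreal (2 * M)"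
  unfolding bdry_morrey_def
proof (intro SUP_least, clarify)
  fix a l :: real assume "l \<in> {0<..1}"
  hence l: "0 < l" "l \<le> 1" by auto
  have M: "0 \<le> M" using assms(2)[of 0] norm_ge_zero[of "bdry f 0"] by linarith
  have "cmod (bdry f t - arc_avg f a l) \<le> 2 * M" for t
    using norm_triangle_ineq4[of "bdry f t" "arc_avg f a l"] assms(2)[of t]
      norm_arc_avg_le[OF assms(1,2) l(1), of a] by linarith
  hence sq: "(cmod (bdry f t - arc_avg f a l))\<^sup>2 \<le> (2 * M)\<^sup>2" for t by (intro power_mono) auto
  have "ennreal (l powr (-lam)) * (\<integral>\<^sup>+ t. indicator {a..a + 2*pi*l} t *
      ennreal ((cmod (bdry f t - arc_avg f a l))\<^sup>2 / (2*pi)) \<partial>lborel)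
      \<le> ennreal (l powr (-lam)) * ennreal ((2 * M)\<^sup>2 * l)"
    (is "?X \<le> _")
    by (rule mult_left_mono[OF nn_integral_arc_le]) (use l sq in auto)
  also have "\<dots> = ennreal ((2 * M)\<^sup>2 * l powr (1 - lam))"
  proof -
    have "l powr (1 - lam) = l * l powr (-lam)" using powr_add[of l 1 "-lam"] l by simp
    thus ?thesis using l by (simp add: ennreal_mult' [symmetric] mult_ac)
  qed
  also have "\<dots> \<le> ennreal ((2 * M)\<^sup>2)"
    using l assms(3,4) by (intro ennreal_leI mult_left_le powr_le1) auto
  finally have "ennsqrt ?X \<le> ennreal (sqrt ((2 * M)\<^sup>2))" by (rule ennsqrt_le) simp
  also have "sqrt ((2 * M)\<^sup>2) = 2 * M" using M by (simp only: real_sqrt_abs)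
  finally show "ennsqrt ?X \<le> ennreal (2 * M)" .
qed

lemma L2lam_if_continuous_on_cball:
  assumes "f holomorphic_on disc" "continuous_on (cball 0 1) f" "0 \<le> lam" "lam \<le> 1"
  shows "f \<in> L2lam lam"
proof -
  have "bounded (f ` cball 0 1)"
    using assms(2) by (intro compact_imp_bounded compact_continuous_image) auto
  then obtain M where M: "\<And>z. z \<in> cball 0 1 \<Longrightarrow> cmod (f z) \<le> M"
    unfolding bounded_iff by blast
  have bdry: "bdry f = (\<lambda>t. f (cis t))"
    using bdry_eq_if_continuous_on_cball[OF assms(2)] by blast
  have "continuous_on UNIV (bdry f)"
    unfolding bdry by (rule continuous_on_compose2[OF assms(2)]) (auto intro!: continuous_intros)
  hence "bdry_morrey lam f \<le> ennreal (2 * M)"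
    using M assms(3,4) by (intro bdry_morrey_le) (auto simp: bdry)
  hence "bdry_morrey lam f < top" using le_less_trans ennreal_less_top by blast
  moreover have "f \<in> H2" using M by (intro H2_if_bounded[OF assms(1), of M]) (auto simp: disc_def)
  ultimately show ?thesis by (simp add: L2lam_def)
qed

lemma L2lam_norm_le:
  assumes b: "b \<in> disc" and lam: "0 \<le> lam" "lam \<le> 3" and K: "0 \<le> K" and f0: "cmod (f 0) \<le> 1"
    and f': "\<And>z. z \<in> disc \<Longrightarrow> (cmod (deriv f z))\<^sup>2 \<le> K * mobius_weight lam b z"
  shows "L2lam_norm lam f \<le> ennreal (1 + 16 * sqrt K)"
proof -
  have "ennsqrt (ennreal (l powr (-lam)) * box_energy (\<lambda>z. (cmod (deriv f z))\<^sup>2) a l) \<le> ennreal (16 * sqrt K)"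
    if "l \<in> {0<..1}" for a l
  proof -
    have "ennreal (l powr (-lam)) * box_energy (\<lambda>z. (cmod (deriv f z))\<^sup>2) a l \<le> ennreal (256 * K)"
      using that f' by (intro scaled_box_energy_le[OF b lam _ _ K]) auto
    from ennsqrt_le[OF this] show ?thesis using K by (simp add: real_sqrt_mult)
  qed
  hence "(SUP (a, l)\<in>UNIV \<times> {0<..1}.
      ennsqrt (ennreal (l powr (-lam)) * box_energy (\<lambda>z. (cmod (deriv f z))\<^sup>2) a l)) \<le> ennreal (16 * sqrt K)"
    by (intro SUP_least) auto
  hence "L2lam_norm lam f \<le> ennreal 1 + ennreal (16 * sqrt K)"
    unfolding L2lam_norm_def box_energy_def using f0 by (intro add_mono ennreal_leI) auto
  thus ?thesis using K by (simp add: ennreal_plus)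
qed

section \<open>The test functions\<close>

text \<open>The principal power of 1 - conj b z is holomorphic on this half-plane.\<close>
definition pos_Re_domain :: "complex \<Rightarrow> complex set" where
  "pos_Re_domain b = {z. 0 < Re (1 - cnj b * z)}"

lemma open_pos_Re_domain: "open (pos_Re_domain b)"
  unfolding pos_Re_domain_def by (intro open_Collect_less continuous_intros)

lemma cball_subset_pos_Re_domain:
  assumes "b \<in> disc"
  shows "cball 0 1 \<subseteq> pos_Re_domain b"
proof
  fix z :: complex assume "z \<in> cball 0 1"
  hence "cmod (cnj b * z) < 1"
    using assms mult_left_mono[of "cmod z" 1 "cmod b"] by (auto simp: disc_def norm_mult)
  moreover have "Re (cnj b * z) \<le> cmod (cnj b * z)" by (rule complex_Re_le_cmod)
  ultimately show "z \<in> pos_Re_domain b" unfolding pos_Re_domain_def by simp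
qed

lemma one_minus_cnj_mult_nonzero: "z \<in> pos_Re_domain b \<Longrightarrow> 1 - cnj b * z \<noteq> 0"
  by (metis mem_Collect_eq pos_Re_domain_def order_less_irrefl zero_complex.sel(1))

lemma has_field_derivative_sigma:
  assumes "1 - cnj b * z \<noteq> 0"
  shows "((\<lambda>z. c * (sigma b z - b)) has_field_derivative
           c * ((cmod b)\<^sup>2 - 1) / (1 - cnj b * z)\<^sup>2) (at z)"
proof -
  have "((\<lambda>z. c * ((b - z) / (1 - cnj b * z) - b)) has_field_derivative
           c * (((- 1) * (1 - cnj b * z) - (b - z) * (- cnj b)) / (1 - cnj b * z)^2 - 0)) (at z)"
    by (intro derivative_eq_intros DERIV_divide) (use assms in \<open>auto simp: power2_eq_square\<close>)
  also have "c * (((- 1) * (1 - cnj b * z) - (b - z) * (- cnj b)) / (1 - cnj b * z)^2 - 0)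
      = c * ((cmod b)\<^sup>2 - 1) / (1 - cnj b * z)\<^sup>2"
    using assms by (simp add: field_simps complex_norm_square[symmetric] mult.commute)
  finally show ?thesis unfolding sigma_def .
qed

lemma has_field_derivative_powr_one_minus_cnj_mult:
  assumes "z \<in> pos_Re_domain b"
  shows "((\<lambda>z. c * (1 - cnj b * z) powr e) has_field_derivative
           c * (e * (1 - cnj b * z) powr (e - 1) * (- cnj b))) (at z)"
proof -
  have "1 - cnj b * z \<notin> \<real>\<^sub>\<le>\<^sub>0"
    using assms by (simp add: pos_Re_domain_def complex_nonpos_Reals_iff)
  thus ?thesis by (auto intro!: derivative_eq_intros)
qed

lemma norm_deriv_sigma:
  assumes "1 - cnj b * z \<noteq> 0"
  shows "cmod (deriv (\<lambda>z. c * (sigma b z - b)) z)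
    = cmod c * \<bar>1 - (cmod b)\<^sup>2\<bar> / (cmod (1 - cnj b * z))\<^sup>2"
proof -
  have "((cmod b)\<^sup>2 - 1 :: complex) = - complex_of_real (1 - (cmod b)\<^sup>2)" by simp
  hence "cmod ((cmod b)\<^sup>2 - 1 :: complex) = \<bar>1 - (cmod b)\<^sup>2\<bar>" by (simp only: norm_minus_cancel norm_of_real)
  thus ?thesis
    using DERIV_imp_deriv[OF has_field_derivative_sigma[OF assms]] by (simp add: norm_mult norm_divide norm_power)
qed

lemma norm_deriv_powr_one_minus_cnj_mult:
  assumes "z \<in> pos_Re_domain b"
  shows "cmod (deriv (\<lambda>z. c * (1 - cnj b * z) powr complex_of_real e) z)
    = cmod c * \<bar>e\<bar> * cmod b * cmod (1 - cnj b * z) powr (e - 1)"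
proof -
  have "cmod ((1 - cnj b * z) powr (complex_of_real e - 1)) = cmod (1 - cnj b * z) powr (e - 1)"
    using norm_powr_real_powr'[of "complex_of_real (e - 1)" "1 - cnj b * z"] by simp
  thus ?thesis
    using DERIV_imp_deriv[OF has_field_derivative_powr_one_minus_cnj_mult[OF assms]] by (simp add: norm_mult)
qed

lemma norm_deriv_sigma_sq_le:
  assumes b: "b \<in> disc" and z: "cmod z \<le> 1" and lam: "0 \<le> lam" "lam \<le> 1"
  shows "(cmod (deriv (\<lambda>z. complex_of_real ((1 - (cmod b)\<^sup>2) powr ((lam - 1) / 2)) * (sigma b z - b)) z))\<^sup>2
      \<le> 4 * mobius_weight lam b z"
proof -
  define D where "D = 1 - (cmod b)\<^sup>2"
  define W where "W = cmod (1 - cnj b * z)"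
  have D: "0 < D" "D \<le> 2 * (1 - cmod b)"
    using b one_minus_norm_sq_bounds(2)[of b] by (auto simp: D_def disc_def abs_square_less_1)
  have w: "1 - cnj b * z \<noteq> 0"
    using one_minus_cnj_mult_nonzero cball_subset_pos_Re_domain[OF b] z by auto
  have "(cmod (deriv (\<lambda>z. complex_of_real (D powr ((lam - 1) / 2)) * (sigma b z - b)) z))\<^sup>2
      = (D powr ((lam - 1) / 2) * D / W\<^sup>2)\<^sup>2"
    using norm_deriv_sigma[OF w, of "complex_of_real (D powr ((lam - 1) / 2))"] D by (simp add: D_def W_def)
  also have "\<dots> = D powr (lam + 1) / W ^ 4"
  proof -
    have "D powr (lam + 1) = D powr (lam - 1) * D powr 2" using powr_add[of D "lam - 1" 2] by (simp add: add.commute)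
    also have "D powr 2 = D * D" using D by (simp add: powr_numeral power2_eq_square)
    also have "D powr (lam - 1) = D powr ((lam - 1) / 2) * D powr ((lam - 1) / 2)"
      by (simp add: powr_add [symmetric])
    finally show ?thesis by (simp add: power2_eq_square power4_eq_xxxx mult_ac)
  qed
  also have "\<dots> \<le> (2 * (1 - cmod b)) powr (lam + 1) / W ^ 4"
    using D lam by (intro divide_right_mono powr_mono2) auto
  also have "\<dots> \<le> 4 * mobius_weight lam b z"
  proof -
    have "(2 * (1 - cmod b)) powr (lam + 1) = 2 powr (lam + 1) * (1 - cmod b) powr (lam + 1)"
      by (rule powr_mult)
    also have "\<dots> \<le> 2 powr 2 * (1 - cmod b) powr (lam + 1)"
      using lam by (intro mult_right_mono powr_mono) auto
    finally show ?thesis by (auto simp: mobius_weight_def W_def intro!: divide_right_mono)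
  qed
  finally show ?thesis by (simp add: D_def)
qed

lemma norm_deriv_powr_sq_le:
  assumes b: "b \<in> disc" and z: "cmod z \<le> 1" and lam: "0 \<le> lam" "lam \<le> 1"
  shows "(cmod (deriv (\<lambda>z. complex_of_real (1 - (cmod b)\<^sup>2) *
      (1 - cnj b * z) powr complex_of_real ((lam - 3) / 2)) z))\<^sup>2 \<le> 9 * mobius_weight lam b z"
proof -
  define D where "D = 1 - (cmod b)\<^sup>2"
  define d where "d = 1 - cmod b"
  define W where "W = cmod (1 - cnj b * z)"
  define e where "e = (lam - 3) / 2"
  have D: "0 \<le> D" "D \<le> 2 * d" using one_minus_norm_sq_bounds[of b] b by (auto simp: D_def d_def disc_def)
  have d: "0 < d" using b by (simp add: d_def disc_def)
  have W: "d \<le> W" using norm_one_minus_cnj_mult_ge[OF z] by (simp add: d_def W_def)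
  have zU: "z \<in> pos_Re_domain b" using cball_subset_pos_Re_domain[OF b] z by auto
  have "(cmod (deriv (\<lambda>z. complex_of_real D * (1 - cnj b * z) powr complex_of_real e) z))\<^sup>2
      = (D * \<bar>e\<bar> * cmod b)\<^sup>2 * (W powr (e - 1))\<^sup>2"
    using norm_deriv_powr_one_minus_cnj_mult[OF zU, of "complex_of_real D" e] D
    by (simp add: W_def power_mult_distrib)
  also have "(W powr (e - 1))\<^sup>2 = W powr (lam - 1) / W ^ 4"
  proof -
    have "(e - 1) + (e - 1) = (lam - 1) - 4" by (simp add: e_def field_simps)
    hence "(W powr (e - 1))\<^sup>2 = W powr ((lam - 1) - 4)" by (metis power2_eq_square powr_add)
    also have "\<dots> = W powr (lam - 1) / W powr 4" by (rule powr_diff)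
    also have "W powr 4 = W ^ 4" using W d by (simp add: powr_numeral)
    finally show ?thesis .
  qed
  also have "(D * \<bar>e\<bar> * cmod b)\<^sup>2 * (W powr (lam - 1) / W ^ 4) \<le> (2 * d * (3 / 2) * 1)\<^sup>2 * (d powr (lam - 1) / W ^ 4)"
  proof (intro mult_mono power_mono divide_right_mono powr_mono2')
    show "\<bar>e\<bar> \<le> 3 / 2" using lam by (simp add: e_def)
    show "cmod b \<le> 1" using b by (simp add: disc_def)
  qed (use D d W lam in auto)
  also have "\<dots> = 9 * mobius_weight lam b z"
  proof -
    have "d powr (lam + 1) = d powr (lam - 1) * d\<^sup>2"
      using powr_add[of d "lam - 1" 2] d by (simp add: add.commute powr_numeral)
    moreover have "mobius_weight lam b z = d powr (lam + 1) / W ^ 4"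
      by (simp add: mobius_weight_def d_def W_def)
    ultimately show ?thesis by (simp add: power2_eq_square)
  qed
  finally show ?thesis by (simp add: D_def e_def)
qed

lemma L2lam_if_holomorphic_on_pos_Re_domain:
  assumes b: "b \<in> disc" and f: "f holomorphic_on pos_Re_domain b" and lam: "0 \<le> lam" "lam \<le> 1"
  shows "f \<in> L2lam lam"
proof (rule L2lam_if_continuous_on_cball[OF _ _ lam])
  show "f holomorphic_on disc"
    using f by (rule holomorphic_on_subset) (use cball_subset_pos_Re_domain[OF b] in \<open>auto simp: disc_def\<close>)
  show "continuous_on (cball 0 1) f"
    using holomorphic_on_imp_continuous_on[OF f] cball_subset_pos_Re_domain[OF b]
    by (rule continuous_on_subset)
qed

lemma holomorphic_on_sigma: "(\<lambda>z. c * (sigma b z - b)) holomorphic_on pos_Re_domain b"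
  unfolding holomorphic_on_open[OF open_pos_Re_domain]
  using has_field_derivative_sigma[OF one_minus_cnj_mult_nonzero] by blast

lemma holomorphic_on_powr_one_minus_cnj_mult:
  "(\<lambda>z. c * (1 - cnj b * z) powr e) holomorphic_on pos_Re_domain b"
  unfolding holomorphic_on_open[OF open_pos_Re_domain]
  using has_field_derivative_powr_one_minus_cnj_mult by blast

lemma L2lam_norm_sigma_le:
  assumes b: "b \<in> disc" and lam: "0 \<le> lam" "lam \<le> 1"
  shows "L2lam_norm lam (\<lambda>z. complex_of_real ((1 - (cmod b)\<^sup>2) powr ((lam - 1) / 2)) * (sigma b z - b))
    \<le> ennreal 33"
proof -
  have "L2lam_norm lam (\<lambda>z. complex_of_real ((1 - (cmod b)\<^sup>2) powr ((lam - 1) / 2)) * (sigma b z - b))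
      \<le> ennreal (1 + 16 * sqrt 4)"
    using norm_deriv_sigma_sq_le[OF b _ lam] lam
    by (intro L2lam_norm_le[OF b]) (auto simp: sigma_def disc_def)
  also have "sqrt 4 = 2" by (rule real_sqrt_unique) simp_all
  finally show ?thesis by simp
qed

lemma L2lam_norm_powr_le:
  assumes b: "b \<in> disc" and lam: "0 \<le> lam" "lam \<le> 1"
  shows "L2lam_norm lam (\<lambda>z. complex_of_real (1 - (cmod b)\<^sup>2) * (1 - cnj b * z) powr complex_of_real ((lam - 3) / 2))
    \<le> ennreal 49"
proof -
  have "0 \<le> 1 - (cmod b)\<^sup>2" using one_minus_norm_sq_bounds(1)[of b] b by (simp add: disc_def)
  hence "cmod (complex_of_real (1 - (cmod b)\<^sup>2)) \<le> 1" by (simp only: norm_of_real) simp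
  hence "L2lam_norm lam (\<lambda>z. complex_of_real (1 - (cmod b)\<^sup>2) * (1 - cnj b * z) powr complex_of_real ((lam - 3) / 2))
      \<le> ennreal (1 + 16 * sqrt 9)"
    using norm_deriv_powr_sq_le[OF b _ lam] lam by (intro L2lam_norm_le[OF b]) (auto simp: disc_def)
  also have "sqrt 9 = 3" by (rule real_sqrt_unique) simp_all
  finally show ?thesis by simp
qed

theorem lemma4:
  fixes lam :: real
  assumes "0 < lam" and "lam < 1"
  shows "\<exists>C::real. \<forall>b\<in>disc.
     (\<lambda>z. complex_of_real ((1 - (cmod b)\<^sup>2) powr ((lam - 1) / 2)) * (sigma b z - b)) \<in> L2lam lam \<and>
     (\<lambda>z. complex_of_real (1 - (cmod b)\<^sup>2) * (1 - cnj b * z) powr complex_of_real ((lam - 3) / 2)) \<in> L2lam lam \<and>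
     L2lam_norm lam (\<lambda>z. complex_of_real ((1 - (cmod b)\<^sup>2) powr ((lam - 1) / 2)) * (sigma b z - b)) \<le> ennreal C \<and>
     L2lam_norm lam (\<lambda>z. complex_of_real (1 - (cmod b)\<^sup>2) * (1 - cnj b * z) powr complex_of_real ((lam - 3) / 2)) \<le> ennreal C"
proof (intro exI[of _ 49] ballI conjI)
  fix b assume b: "b \<in> disc"
  have lam: "0 \<le> lam" "lam \<le> 1" using assms by auto
  show "(\<lambda>z. complex_of_real ((1 - (cmod b)\<^sup>2) powr ((lam - 1) / 2)) * (sigma b z - b)) \<in> L2lam lam"
    by (rule L2lam_if_holomorphic_on_pos_Re_domain[OF b holomorphic_on_sigma lam])
  show "(\<lambda>z. complex_of_real (1 - (cmod b)\<^sup>2) * (1 - cnj b * z) powr complex_of_real ((lam - 3) / 2))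
      \<in> L2lam lam"
    by (rule L2lam_if_holomorphic_on_pos_Re_domain[OF b holomorphic_on_powr_one_minus_cnj_mult lam])
  show "L2lam_norm lam (\<lambda>z. complex_of_real ((1 - (cmod b)\<^sup>2) powr ((lam - 1) / 2)) * (sigma b z - b))
      \<le> ennreal 49"
    using L2lam_norm_sigma_le[OF b lam] by (rule order_trans) simp
  show "L2lam_norm lam (\<lambda>z. complex_of_real (1 - (cmod b)\<^sup>2) * (1 - cnj b * z) powr complex_of_real ((lam - 3) / 2))
      \<le> ennreal 49"
    by (rule L2lam_norm_powr_le[OF b lam])
qed

end
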